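(* Let $\mathcal{H}$ be a separable complex Hilbert space, let $N \in B(\mathcal{H})$ be normal, let $U$ be a unitary operator belonging to $\mathcal{W}^*(N)$, let $a \in \mathbb{C}$ and $v \in \mathcal{H}$. Then the operator $T = N + a(Uv \otimes v)$ is a complex symmetric operator.
   Context: $\mathcal{W}^*(N)$ denotes the von Neumann algebra generated by $N$. For $x,y\in\mathcal{H}$, $x\otimes y$ denotes the rank-one operator $f \mapsto \langle f, y\rangle x$. A conjugation on $\mathcal{H}$ is a conjugate-linear map $C:\mathcal{H}\to\mathcal{H}$ that is isometric and involutive ($C^2=I$). An operator $T$ is complex symmetric if $T = CT^*C$ for some conjugation $C$. *)

theory Defs
  imports "HOL-Analysis.Analysis"
begin

text \<open>HOL-Analysis has only real inner product spaces, so complex scalar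
multiplication and a complex inner product (linear in the first argument,
conjugate-linear in the second) are introduced as a type class.\<close>

class complex_inner = real_normed_vector +
  fixes cscale :: "complex \<Rightarrow> 'a \<Rightarrow> 'a"
    and cinner :: "'a \<Rightarrow> 'a \<Rightarrow> complex"
  assumes cscale_of_real: "cscale (complex_of_real r) x = r *\<^sub>R x"
    and cscale_add_right: "cscale c (x + y) = cscale c x + cscale c y"
    and cscale_add_left: "cscale (c + d) x = cscale c x + cscale d x"
    and cscale_cscale: "cscale c (cscale d x) = cscale (c * d) x"
    and cinner_add_left: "cinner (x + y) z = cinner x z + cinner y z"
    and cinner_cscale_left: "cinner (cscale c x) y = c * cinner x y"
    and cinner_commute: "cinner y x = cnj (cinner x y)"
    and norm_eq_cinner: "norm x = sqrt (Re (cinner x x))"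

class chilbert = complex_inner + complete_space

definition is_separable :: "'a::topological_space itself \<Rightarrow> bool" where
  "is_separable _ \<longleftrightarrow> (\<exists>D::'a set. countable D \<and> closure D = UNIV)"

definition clinear_op :: "('a::complex_inner \<Rightarrow> 'a) \<Rightarrow> bool" where
  "clinear_op T \<longleftrightarrow> (\<forall>x y. T (x + y) = T x + T y) \<and> (\<forall>c x. T (cscale c x) = cscale c (T x))"

definition bounded_op :: "('a::complex_inner \<Rightarrow> 'a) \<Rightarrow> bool" where
  "bounded_op T \<longleftrightarrow> clinear_op T \<and> (\<exists>K. \<forall>x. norm (T x) \<le> norm x * K)"

text \<open>The Hilbert-space adjoint (exists and is unique for bounded operators).\<close>
definition cadjoint :: "('a::complex_inner \<Rightarrow> 'a) \<Rightarrow> ('a \<Rightarrow> 'a)" where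
  "cadjoint T = (SOME S. \<forall>x y. cinner (T x) y = cinner x (S y))"

definition normal_op :: "('a::complex_inner \<Rightarrow> 'a) \<Rightarrow> bool" where
  "normal_op N \<longleftrightarrow> bounded_op N \<and> N \<circ> cadjoint N = cadjoint N \<circ> N"

definition unitary_op :: "('a::complex_inner \<Rightarrow> 'a) \<Rightarrow> bool" where
  "unitary_op U \<longleftrightarrow> bounded_op U \<and> cadjoint U \<circ> U = id \<and> U \<circ> cadjoint U = id"

definition wot_closed :: "('a::complex_inner \<Rightarrow> 'a) set \<Rightarrow> bool" where
  "wot_closed A \<longleftrightarrow>
     (\<forall>T. bounded_op T \<and>
          (\<forall>e>0. \<forall>F. finite F \<longrightarrow>
             (\<exists>S\<in>A. \<forall>(x, y)\<in>F. cmod (cinner (T x) y - cinner (S x) y) < e))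
        \<longrightarrow> T \<in> A)"

definition von_neumann_algebra :: "('a::complex_inner \<Rightarrow> 'a) set \<Rightarrow> bool" where
  "von_neumann_algebra A \<longleftrightarrow>
     (\<forall>T\<in>A. bounded_op T) \<and> id \<in> A \<and>
     (\<forall>S\<in>A. \<forall>T\<in>A. (\<lambda>x. S x + T x) \<in> A) \<and>
     (\<forall>S\<in>A. \<forall>T\<in>A. S \<circ> T \<in> A) \<and>
     (\<forall>c. \<forall>T\<in>A. (\<lambda>x. cscale c (T x)) \<in> A) \<and>
     (\<forall>T\<in>A. cadjoint T \<in> A) \<and>
     wot_closed A"

definition vN_generated :: "('a::complex_inner \<Rightarrow> 'a) \<Rightarrow> ('a \<Rightarrow> 'a) set" where
  "vN_generated N = \<Inter> {A. von_neumann_algebra A \<and> N \<in> A}"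

text \<open>x \<otimes> y is the operator f \<mapsto> \<langle>f, y\<rangle> x.\<close>
definition rank_one :: "'a::complex_inner \<Rightarrow> 'a \<Rightarrow> ('a \<Rightarrow> 'a)" where
  "rank_one x y = (\<lambda>f. cscale (cinner f y) x)"

definition conjugation :: "('a::complex_inner \<Rightarrow> 'a) \<Rightarrow> bool" where
  "conjugation C \<longleftrightarrow>
     (\<forall>x y. C (x + y) = C x + C y) \<and> (\<forall>c x. C (cscale c x) = cscale (cnj c) (C x)) \<and>
     (\<forall>x. norm (C x) = norm x) \<and> (\<forall>x. C (C x) = x)"

definition complex_symmetric :: "('a::complex_inner \<Rightarrow> 'a) \<Rightarrow> bool" where
  "complex_symmetric T \<longleftrightarrow> (\<exists>C. conjugation C \<and> T = C \<circ> cadjoint T \<circ> C)"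

end

theory Submission
  imports Defs
begin

text \<open>Let \<open>A\<close> be the bicommutant of \<open>{N, N\<^sup>*, U, U\<^sup>*}\<close>.  Since \<open>W\<^sup>*(N)\<close> lies in the bicommutant
  of \<open>{N, N\<^sup>*}\<close>, \<open>U\<close> commutes with \<open>N\<close> and \<open>N\<^sup>*\<close>, so \<open>A\<close> is a commutative *-algebra
  containing \<open>U\<close> and \<open>N\<^sup>*\<close>.  Split the separable space into mutually orthogonal \<open>A\<close>-orbits of
  vectors \<open>w\<^sub>0 = v, w\<^sub>1, \<dots>\<close> with dense span, and put \<open>J (\<Sum> S\<^sub>i w\<^sub>i) = \<Sum> S\<^sub>i\<^sup>* w\<^sub>i\<close> for
  \<open>S\<^sub>i \<in> A\<close>.  As the elements of \<open>A\<close> are normal, \<open>J\<close> is well defined and isometric, so it extends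
  to a conjugation with \<open>J v = v\<close> and \<open>J S J = S\<^sup>*\<close> for \<open>S \<in> A\<close>.  Then \<open>C = U J\<close> is a
  conjugation with \<open>C N\<^sup>* C = U (U N\<^sup>*)\<^sup>* = N\<close> and \<open>C v = U v\<close>, and for any such \<open>C\<close> the
  operator \<open>T = N + a (C v \<otimes> v)\<close> satisfies \<open>C T\<^sup>* C = T\<close>.\<close>

section \<open>Complex inner product spaces\<close>

lemma cscale_one [simp]: "cscale 1 x = x"
  using cscale_of_real[of 1 x] by simp

lemma cscale_zero_left [simp]: "cscale 0 x = 0"
  using cscale_of_real[of 0 x] by simp

lemma cscale_zero_right [simp]: "cscale c 0 = 0"
  using cscale_add_right[of c 0 0] by simp

lemma cscale_minus_left: "cscale (- c) x = - cscale c x"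
  using cscale_add_left[of c "- c" x] by (simp add: add_eq_0_iff2)

lemma cscale_sum_right: "cscale c (sum f A) = (\<Sum>i\<in>A. cscale c (f i))"
  by (induction A rule: infinite_finite_induct) (auto simp: cscale_add_right)

lemma scaleR_eq_cscale: "r *\<^sub>R x = cscale (complex_of_real r) x"
  by (simp add: cscale_of_real)

lemma cinner_add_right: "cinner x (y + z) = cinner x y + cinner x z"
  by (metis cinner_commute cinner_add_left complex_cnj_add)

lemma cinner_cscale_right: "cinner x (cscale c y) = cnj c * cinner x y"
  by (metis cinner_commute cinner_cscale_left complex_cnj_mult)

lemma cinner_zero_left [simp]: "cinner 0 x = 0"
  using cinner_add_left[of 0 0 x] by simp

lemma cinner_zero_right [simp]: "cinner x 0 = 0"
  using cinner_add_right[of x 0 0] by simp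

lemma cinner_minus_left: "cinner (- x) y = - cinner x y"
  using cinner_add_left[of x "- x" y] by (simp add: add_eq_0_iff2)

lemma cinner_minus_right: "cinner x (- y) = - cinner x y"
  using cinner_add_right[of x y "- y"] by (simp add: add_eq_0_iff2)

lemma cinner_diff_left: "cinner (x - y) z = cinner x z - cinner y z"
  using cinner_add_left[of x "- y" z] by (simp add: cinner_minus_left)

lemma cinner_diff_right: "cinner x (y - z) = cinner x y - cinner x z"
  using cinner_add_right[of x y "- z"] by (simp add: cinner_minus_right)

lemma cinner_sum_left: "cinner (sum f A) y = (\<Sum>i\<in>A. cinner (f i) y)"
  by (induction A rule: infinite_finite_induct) (auto simp: cinner_add_left)

lemma cinner_sum_right: "cinner y (sum f A) = (\<Sum>i\<in>A. cinner y (f i))"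
  by (induction A rule: infinite_finite_induct) (auto simp: cinner_add_right)

lemma cinner_self_eq_norm_power2: "cinner x x = complex_of_real ((norm x)\<^sup>2)"
proof -
  have "Im (cinner x x) = 0"
    using cinner_commute[of x x] by (metis Reals_cnj_iff complex_is_Real_iff)
  moreover have "Re (cinner x x) \<ge> 0"
    using norm_eq_cinner[of x] by (metis norm_ge_zero real_sqrt_lt_0_iff not_le)
  ultimately show ?thesis
    by (simp add: norm_eq_cinner complex_eq_iff)
qed

lemma Re_cinner_self: "Re (cinner x x) = (norm x)\<^sup>2"
  by (simp add: cinner_self_eq_norm_power2)

lemma cinner_self_eq_0 [simp]: "cinner x x = 0 \<longleftrightarrow> x = 0"
  by (simp add: cinner_self_eq_norm_power2)

lemma cinner_ext_left: "(\<And>y. cinner x y = cinner z y) \<Longrightarrow> x = z"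
  by (metis cinner_diff_left cinner_self_eq_0 eq_iff_diff_eq_0)

lemma cinner_ext_right: "(\<And>y. cinner y x = cinner y z) \<Longrightarrow> x = z"
  by (metis cinner_diff_right cinner_self_eq_0 eq_iff_diff_eq_0)

lemma norm_eq_of_cinner_self_eq:
  assumes "cinner x x = cinner y y"
  shows "norm x = norm y"
  using assms Re_cinner_self[of x] Re_cinner_self[of y]
  by (metis norm_ge_zero power2_eq_iff_nonneg)

lemma norm_cscale: "norm (cscale c x) = cmod c * norm x"
proof -
  have "cinner (cscale c x) (cscale c x) = (c * cnj c) * cinner x x"
    by (simp add: cinner_cscale_left cinner_cscale_right mult.assoc)
  also have "\<dots> = cinner (cmod c *\<^sub>R x) (cmod c *\<^sub>R x)"
    by (simp add: scaleR_eq_cscale cinner_cscale_left cinner_cscale_right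
        power2_eq_square flip: complex_norm_square)
  finally show ?thesis
    by (metis norm_eq_of_cinner_self_eq norm_scaleR abs_norm_cancel)
qed

lemma norm_add_power2: "(norm (x + y))\<^sup>2 = (norm x)\<^sup>2 + (norm y)\<^sup>2 + 2 * Re (cinner x y)"
proof -
  have "cinner (x + y) (x + y) = cinner x x + cinner y y + (cinner x y + cnj (cinner x y))"
    by (simp add: cinner_add_left cinner_add_right cinner_commute[of x y])
  then show ?thesis by (simp add: Re_cinner_self[symmetric])
qed

lemma norm_diff_power2: "(norm (x - y))\<^sup>2 = (norm x)\<^sup>2 + (norm y)\<^sup>2 - 2 * Re (cinner x y)"
  using norm_add_power2[of x "- y"] by (simp add: cinner_minus_right)

lemma Re_cinner_polarization: "Re (cinner x y) = ((norm (x + y))\<^sup>2 - (norm (x - y))\<^sup>2) / 4"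
  using norm_add_power2[of x y] norm_diff_power2[of x y] by simp

lemma Im_cinner_eq_Re: "Im (cinner x y) = Re (cinner x (cscale \<i> y))"
  by (simp add: cinner_cscale_right)

lemma cmod_cinner_le: "cmod (cinner x y) \<le> norm x * norm y"
proof (cases "y = 0")
  case True
  then show ?thesis by simp
next
  case False
  then have ny: "norm y > 0" by simp
  \<comment> \<open>expand \<open>0 \<le> \<parallel>x - t y\<parallel>\<^sup>2\<close> at the minimising \<open>t = \<langle>x, y\<rangle> / \<parallel>y\<parallel>\<^sup>2\<close>\<close>
  define t where "t = cinner x y / complex_of_real ((norm y)\<^sup>2)"
  have "cinner (x - cscale t y) (x - cscale t y)
      = cinner x x - cnj t * cinner x y - t * cinner y x + t * cnj t * cinner y y"
    by (simp add: cinner_diff_left cinner_diff_right cinner_cscale_left cinner_cscale_right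
        algebra_simps)
  also have "\<dots> = complex_of_real ((norm x)\<^sup>2 - (cmod (cinner x y))\<^sup>2 / (norm y)\<^sup>2)"
    using ny by (simp add: t_def cinner_commute[of y x] cinner_self_eq_norm_power2
        field_simps flip: complex_norm_square of_real_power)
  finally have "0 \<le> (norm x)\<^sup>2 - (cmod (cinner x y))\<^sup>2 / (norm y)\<^sup>2"
    by (metis Re_complex_of_real Re_cinner_self zero_le_power2)
  then have "(cmod (cinner x y))\<^sup>2 \<le> (norm x * norm y)\<^sup>2"
    using ny by (simp add: divide_le_eq power_mult_distrib)
  then show ?thesis
    by (simp add: power2_le_iff_abs_le)
qed

lemma bounded_linear_cinner_left: "bounded_linear (\<lambda>x. cinner x y)"
  by (rule bounded_linear_intro[where K = "norm y"])
     (simp_all add: cinner_add_left scaleR_eq_cscale cinner_cscale_left scaleR_conv_of_real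
       cmod_cinner_le)

lemma continuous_on_cinner_left [continuous_intros]:
  "continuous_on X f \<Longrightarrow> continuous_on X (\<lambda>x. cinner (f x) y)"
  using bounded_linear.continuous_on[OF bounded_linear_cinner_left] .

lemma continuous_on_cinner_right [continuous_intros]:
  "continuous_on X f \<Longrightarrow> continuous_on X (\<lambda>x. cinner y (f x))"
  by (subst cinner_commute) (intro continuous_intros)

lemma bounded_linear_cscale: "bounded_linear (cscale c)"
  by (rule bounded_linear_intro[where K = "cmod c"])
     (simp_all add: cscale_add_right scaleR_eq_cscale cscale_cscale mult.commute norm_cscale)

lemma continuous_on_cscale [continuous_intros]:
  "continuous_on X f \<Longrightarrow> continuous_on X (\<lambda>x. cscale c (f x))"
  using bounded_linear.continuous_on[OF bounded_linear_cscale] .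

section \<open>Bounded operators\<close>

lemma bounded_op_add: "bounded_op T \<Longrightarrow> T (x + y) = T x + T y"
  by (simp add: bounded_op_def clinear_op_def)

lemma bounded_op_cscale: "bounded_op T \<Longrightarrow> T (cscale c x) = cscale c (T x)"
  by (simp add: bounded_op_def clinear_op_def)

lemma bounded_op_imp_bounded_linear:
  assumes "bounded_op T"
  shows "bounded_linear T"
proof -
  obtain K where "\<forall>x. norm (T x) \<le> norm x * K"
    using assms by (auto simp: bounded_op_def)
  then show ?thesis
    by (intro bounded_linear_intro[where K = K])
       (auto simp: bounded_op_add[OF assms] scaleR_eq_cscale bounded_op_cscale[OF assms])
qed

lemma bounded_op_sum: "bounded_op T \<Longrightarrow> T (sum f A) = (\<Sum>i\<in>A. T (f i))"
  using bounded_op_imp_bounded_linear linear_sum bounded_linear.linear by blast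

lemma continuous_on_bounded_op:
  "bounded_op T \<Longrightarrow> continuous_on X f \<Longrightarrow> continuous_on X (\<lambda>x. T (f x))"
  using bounded_op_imp_bounded_linear bounded_linear.continuous_on by blast

lemma bounded_op_id: "bounded_op id"
  unfolding bounded_op_def clinear_op_def by (auto intro!: exI[of _ 1])

lemma bounded_opI: "clinear_op T \<Longrightarrow> bounded_linear T \<Longrightarrow> bounded_op T"
  unfolding bounded_op_def using bounded_linear.bounded by blast

lemma bounded_op_comp:
  assumes "bounded_op S" "bounded_op T"
  shows "bounded_op (S \<circ> T)"
proof (rule bounded_opI)
  show "clinear_op (S \<circ> T)"
    by (simp add: clinear_op_def bounded_op_add[OF assms(1)] bounded_op_add[OF assms(2)]
        bounded_op_cscale[OF assms(1)] bounded_op_cscale[OF assms(2)])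
  show "bounded_linear (S \<circ> T)"
    unfolding comp_def using assms
    by (intro bounded_linear_compose[of S T] bounded_op_imp_bounded_linear)
qed

lemma bounded_op_plus:
  assumes "bounded_op S" "bounded_op T"
  shows "bounded_op (\<lambda>x. S x + T x)"
proof (rule bounded_opI)
  show "clinear_op (\<lambda>x. S x + T x)"
    by (simp add: clinear_op_def bounded_op_add[OF assms(1)] bounded_op_add[OF assms(2)]
        bounded_op_cscale[OF assms(1)] bounded_op_cscale[OF assms(2)] cscale_add_right add_ac)
  show "bounded_linear (\<lambda>x. S x + T x)"
    using assms by (intro bounded_linear_add[of S T] bounded_op_imp_bounded_linear)
qed

lemma bounded_op_scale:
  assumes "bounded_op T"
  shows "bounded_op (\<lambda>x. cscale c (T x))"
proof (rule bounded_opI)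
  show "clinear_op (\<lambda>x. cscale c (T x))"
    by (simp add: clinear_op_def bounded_op_add[OF assms] bounded_op_cscale[OF assms]
        cscale_add_right cscale_cscale mult.commute)
  show "bounded_linear (\<lambda>x. cscale c (T x))"
    using bounded_linear_compose[OF bounded_linear_cscale bounded_op_imp_bounded_linear[OF assms]] .
qed

section \<open>Orthogonal projections and the Riesz representation theorem\<close>

definition csubspace :: "'a::complex_inner set \<Rightarrow> bool" where
  "csubspace M \<longleftrightarrow> 0 \<in> M \<and> (\<forall>x\<in>M. \<forall>y\<in>M. x + y \<in> M) \<and> (\<forall>c. \<forall>x\<in>M. cscale c x \<in> M)"

lemma csubspace_closure:
  assumes "csubspace M"
  shows "csubspace (closure M)"
proof -
  have M: "0 \<in> M" "\<And>x y. x \<in> M \<Longrightarrow> y \<in> M \<Longrightarrow> x + y \<in> M"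
    "\<And>c x. x \<in> M \<Longrightarrow> cscale c x \<in> M"
    using assms unfolding csubspace_def by auto
  have cont: "continuous_on (closure M) f" if "bounded_linear f" for f :: "'a \<Rightarrow> 'a"
    using that by (rule bounded_linear.continuous_on[OF _ continuous_on_id])
  have "cscale c ` closure M \<subseteq> closure M" for c
    using M(3) closure_subset
    by (intro image_closure_subset cont bounded_linear_cscale closed_closure) auto
  moreover have "(+) x ` closure M \<subseteq> closure M" if "x \<in> M" for x
    using M(2)[OF that] closure_subset
    by (intro image_closure_subset continuous_intros closed_closure) auto
  then have "(\<lambda>x. x + y) ` closure M \<subseteq> closure M" if "y \<in> closure M" for y
    using that by (intro image_closure_subset continuous_intros closed_closure) auto
  ultimately show ?thesis
    unfolding csubspace_def using M(1) closure_subset by blast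
qed

lemma midpoint_of_near_points:
  fixes x a b :: "'a::complex_inner"
  assumes "d \<le> norm (x - midpoint a b)" "norm (x - a) \<le> d + e" "norm (x - b) \<le> d + e"
    and "0 \<le> d" "0 \<le> e"
  shows "(norm (a - b))\<^sup>2 \<le> 8 * d * e + 4 * e\<^sup>2"
proof -
  have "(x - a) + (x - b) = 2 *\<^sub>R (x - midpoint a b)"
    by (simp add: midpoint_def algebra_simps flip: scaleR_2)
  then have "2 * d \<le> norm ((x - a) + (x - b))"
    using assms(1) by simp
  then have "4 * d\<^sup>2 \<le> (norm ((x - a) + (x - b)))\<^sup>2"
    using assms(4) power_mono[of "2 * d" _ 2] by (simp add: power_mult_distrib)
  moreover have "(norm (x - a))\<^sup>2 \<le> (d + e)\<^sup>2" "(norm (x - b))\<^sup>2 \<le> (d + e)\<^sup>2"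
    using assms by (simp_all add: power_mono)
  moreover have "(norm (a - b))\<^sup>2 + (norm ((x - a) + (x - b)))\<^sup>2
      = 2 * (norm (x - a))\<^sup>2 + 2 * (norm (x - b))\<^sup>2"
    using norm_add_power2[of "x - a" "x - b"] norm_diff_power2[of "x - a" "x - b"]
    by (simp add: norm_minus_commute)
  ultimately show ?thesis
    by (simp add: power2_eq_square algebra_simps)
qed

lemma minimizing_sequence_Cauchy:
  fixes x :: "'a::complex_inner" and m :: "nat \<Rightarrow> 'a"
  assumes mid: "\<And>k l. d \<le> norm (x - midpoint (m k) (m l))"
    and near: "\<And>k. norm (x - m k) < d + inverse (real (Suc k))" and "0 \<le> d"
  shows "Cauchy m"
proof (rule metric_CauchyI)
  fix e :: real assume "0 < e"
  define \<epsilon> where "\<epsilon> k = inverse (real (Suc k))" for k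
  define g where "g K = 8 * d * \<epsilon> K + 4 * (\<epsilon> K)\<^sup>2" for K
  have g_bound: "(norm (m k - m l))\<^sup>2 \<le> g K" if "K \<le> k" "K \<le> l" for K k l
    unfolding g_def
  proof (rule midpoint_of_near_points[OF mid])
    have "\<epsilon> k \<le> \<epsilon> K" "\<epsilon> l \<le> \<epsilon> K"
      using that by (simp_all add: \<epsilon>_def le_imp_inverse_le)
    then show "norm (x - m k) \<le> d + \<epsilon> K" "norm (x - m l) \<le> d + \<epsilon> K"
      using near[of k] near[of l] unfolding \<epsilon>_def by linarith+
  qed (simp_all add: \<open>0 \<le> d\<close> \<epsilon>_def)
  have "\<epsilon> \<longlonglongrightarrow> 0"
    unfolding \<epsilon>_def by (rule LIMSEQ_inverse_real_of_nat)
  then have "g \<longlonglongrightarrow> 0"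
    unfolding g_def by (auto intro!: tendsto_eq_intros)
  then obtain K where "g K < e\<^sup>2"
    using \<open>0 < e\<close> order_tendstoD(2)[of g 0 sequentially "e\<^sup>2"] by (auto dest: eventually_happens)
  then have "dist (m k) (m l) < e" if "K \<le> k" "K \<le> l" for k l
    using g_bound[OF that] \<open>0 < e\<close> unfolding dist_norm
    by (metis order.strict_trans1 power_less_imp_less_base less_imp_le)
  then show "\<exists>K. \<forall>k\<ge>K. \<forall>l\<ge>K. dist (m k) (m l) < e"
    by blast
qed

lemma closed_csubspace_nearest_point:
  fixes x :: "'a::chilbert"
  assumes "csubspace M" "closed M"
  shows "\<exists>p\<in>M. \<forall>m\<in>M. norm (x - p) \<le> norm (x - m)"
proof -
  define d where "d = (INF m\<in>M. norm (x - m))"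
  have M0: "M \<noteq> {}" and M_midpoint: "\<And>a b. a \<in> M \<Longrightarrow> b \<in> M \<Longrightarrow> midpoint a b \<in> M"
    using assms(1) by (auto simp: csubspace_def midpoint_def scaleR_eq_cscale)
  have bdd: "bdd_below ((\<lambda>m. norm (x - m)) ` M)"
    by (auto intro: bdd_belowI[of _ 0])
  have d_le: "d \<le> norm (x - m)" if "m \<in> M" for m
    unfolding d_def using bdd that by (rule cINF_lower)
  have d0: "0 \<le> d"
    unfolding d_def using M0 by (auto intro!: cINF_greatest)
  have "\<exists>m\<in>M. norm (x - m) < d + inverse (real (Suc k))" for k
    using cINF_less_iff[OF M0 bdd, of "d + inverse (real (Suc k))"] by (simp add: d_def)
  then obtain m where m: "\<And>k. m k \<in> M" "\<And>k. norm (x - m k) < d + inverse (real (Suc k))"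
    by metis
  have "Cauchy m"
    using d_le M_midpoint m d0 by (intro minimizing_sequence_Cauchy[where x = x and d = d]) auto
  then obtain p where p: "m \<longlonglongrightarrow> p"
    using Cauchy_convergent convergent_def by blast
  have "p \<in> M"
    using closed_sequentially[OF assms(2) m(1) p] .
  moreover have "norm (x - p) \<le> d"
  proof (rule LIMSEQ_le)
    show "(\<lambda>k. norm (x - m k)) \<longlonglongrightarrow> norm (x - p)"
      by (intro tendsto_intros p)
    show "(\<lambda>k. d + inverse (real (Suc k))) \<longlonglongrightarrow> d"
      using tendsto_add[OF tendsto_const LIMSEQ_inverse_real_of_nat] by simp
  qed (use m(2) less_imp_le in blast)
  ultimately show ?thesis
    using d_le order_trans by blast
qed

lemma closed_csubspace_orthogonal_point:
  fixes x :: "'a::chilbert"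
  assumes "csubspace M" "closed M"
  shows "\<exists>p\<in>M. \<forall>m\<in>M. cinner (x - p) m = 0"
proof -
  obtain p where p: "p \<in> M" and nearest: "\<And>m. m \<in> M \<Longrightarrow> norm (x - p) \<le> norm (x - m)"
    using closed_csubspace_nearest_point[OF assms] by blast
  have "cinner (x - p) m = 0" if m: "m \<in> M" for m
  proof (rule ccontr)
    define z where "z = x - p"
    define c where "c = cinner z m"
    \<comment> \<open>moving from \<open>p\<close> towards \<open>p + s c m\<close> with small \<open>s > 0\<close> would come strictly closer to \<open>x\<close>\<close>
    define s where "s = 1 / ((norm m)\<^sup>2 + 1)"
    assume "cinner (x - p) m \<noteq> 0"
    then have sc: "s * (cmod c)\<^sup>2 > 0"
      by (auto simp: s_def c_def z_def intro!: divide_pos_pos add_nonneg_pos)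
    have sm: "s * (norm m)\<^sup>2 < 1"
      by (simp add: s_def add_nonneg_pos)
    have "p + cscale (complex_of_real s * c) m \<in> M"
      using assms(1) p m unfolding csubspace_def by blast
    then have "(norm z)\<^sup>2 \<le> (norm (z - cscale (complex_of_real s * c) m))\<^sup>2"
      using nearest unfolding z_def by (simp add: diff_diff_eq power_mono)
    also have "\<dots> = (norm z)\<^sup>2 + (s * cmod c * norm m)\<^sup>2 - 2 * (s * (cmod c)\<^sup>2)"
    proof -
      have "cinner z (cscale (complex_of_real s * c) m) = complex_of_real (s * (cmod c)\<^sup>2)"
        by (simp add: cinner_cscale_right c_def mult.commute flip: complex_norm_square of_real_power)
      moreover have "s \<ge> 0"
        by (simp add: s_def)
      ultimately show ?thesis
        by (simp add: norm_diff_power2 norm_cscale norm_mult)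
    qed
    finally have "0 \<le> (s * (cmod c)\<^sup>2) * (s * (norm m)\<^sup>2 - 2)"
      by (simp add: power2_eq_square algebra_simps)
    with sc sm show False
      by (simp add: zero_le_mult_iff)
  qed
  with p show ?thesis by blast
qed

definition orth_proj :: "'a::complex_inner set \<Rightarrow> 'a \<Rightarrow> 'a" where
  "orth_proj M x = (SOME p. p \<in> M \<and> (\<forall>m\<in>M. cinner (x - p) m = 0))"

lemma
  fixes M :: "'a::chilbert set"
  assumes "csubspace M" "closed M"
  shows orth_proj_in: "orth_proj M x \<in> M"
    and orth_proj_orthogonal: "m \<in> M \<Longrightarrow> cinner (x - orth_proj M x) m = 0"
  using someI_ex[OF closed_csubspace_orthogonal_point[OF assms, of x, unfolded Bex_def]]
  unfolding orth_proj_def by auto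

theorem riesz_representation:
  fixes f :: "'a::chilbert \<Rightarrow> complex"
  assumes add: "\<And>x y. f (x + y) = f x + f y" and scale: "\<And>c x. f (cscale c x) = c * f x"
    and bound: "\<And>x. cmod (f x) \<le> norm x * K"
  shows "\<exists>y. \<forall>x. f x = cinner x y"
proof (cases "\<forall>x. f x = 0")
  case True
  then show ?thesis by (intro exI[of _ 0]) simp
next
  case False
  then obtain x0 where fx0: "f x0 \<noteq> 0" by blast
  have "bounded_linear f"
    by (rule bounded_linear_intro[where K = K])
       (auto simp: add bound scaleR_eq_cscale scale scaleR_conv_of_real)
  then have "closed {x. f x = 0}"
    by (intro closed_Collect_eq continuous_intros) (auto intro: linear_continuous_on)
  moreover have f_diff: "f (a - b) = f a - f b" for a b
    using add[of "a - b" b] by simp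
  then have f0: "f 0 = 0"
    by (metis diff_self)
  then have "csubspace {x. f x = 0}"
    unfolding csubspace_def using scale add by simp
  ultimately obtain p where p: "f p = 0" and orth: "\<And>m. f m = 0 \<Longrightarrow> cinner (x0 - p) m = 0"
    using closed_csubspace_orthogonal_point[of "{x. f x = 0}" x0] by auto
  \<comment> \<open>\<open>z\<close> is orthogonal to the kernel of \<open>f\<close>, so \<open>f\<close> is a multiple of \<open>\<langle>-, z\<rangle>\<close>\<close>
  define z where "z = x0 - p"
  have fz: "f z = f x0"
    using p by (simp add: z_def f_diff)
  then have z0: "cinner z z \<noteq> 0"
    using fx0 f0 by auto
  have "f x = cinner x (cscale (cnj (f z) / cnj (cinner z z)) z)" for x
  proof -
    have "f (cscale (f x) z - cscale (f z) x) = 0"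
      by (simp add: f_diff scale)
    then have "cinner z (cscale (f x) z - cscale (f z) x) = 0"
      using orth unfolding z_def[symmetric] by (metis cinner_commute complex_cnj_zero)
    then have "cnj (f x) = cnj (f z) * cinner z x / cinner z z"
      using z0 by (simp add: cinner_diff_right cinner_cscale_right field_simps)
    then have "f x = f z * cinner x z / cnj (cinner z z)"
      by (metis cinner_commute complex_cnj_cnj complex_cnj_divide complex_cnj_mult)
    then show ?thesis
      by (simp add: cinner_cscale_right flip: cinner_commute[of z z])
  qed
  then show ?thesis by blast
qed

section \<open>Adjoints\<close>

lemma cadjoint_exists:
  fixes T :: "'a::chilbert \<Rightarrow> 'a"
  assumes "bounded_op T"
  shows "\<exists>S. \<forall>x y. cinner (T x) y = cinner x (S y)"
proof -
  obtain K where K: "\<And>x. norm (T x) \<le> norm x * K"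
    using assms by (auto simp: bounded_op_def)
  have "\<exists>w. \<forall>x. cinner (T x) y = cinner x w" for y
  proof (rule riesz_representation[where K = "K * norm y"])
    show "cinner (T (x + z)) y = cinner (T x) y + cinner (T z) y" for x z
      by (simp add: bounded_op_add[OF assms] cinner_add_left)
    show "cinner (T (cscale c x)) y = c * cinner (T x) y" for c x
      by (simp add: bounded_op_cscale[OF assms] cinner_cscale_left)
    show "cmod (cinner (T x) y) \<le> norm x * (K * norm y)" for x
      using cmod_cinner_le[of "T x" y] mult_right_mono[OF K[of x], of "norm y"]
      by (simp add: mult.assoc)
  qed
  then show ?thesis by metis
qed

lemma cinner_cadjoint_right:
  fixes T :: "'a::chilbert \<Rightarrow> 'a"
  assumes "bounded_op T"
  shows "cinner (T x) y = cinner x (cadjoint T y)"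
  using someI_ex[OF cadjoint_exists[OF assms]] unfolding cadjoint_def by blast

lemma cinner_cadjoint_left:
  fixes T :: "'a::chilbert \<Rightarrow> 'a"
  assumes "bounded_op T"
  shows "cinner (cadjoint T x) y = cinner x (T y)"
  by (metis cinner_cadjoint_right[OF assms] cinner_commute)

lemma cadjoint_eqI:
  assumes "\<And>x y. cinner (T x) y = cinner x (S y)"
  shows "cadjoint T = S"
proof
  have "\<forall>x y. cinner (T x) y = cinner x (cadjoint T y)"
    unfolding cadjoint_def by (rule someI[of _ S]) (use assms in blast)
  then show "cadjoint T y = S y" for y
    by (metis cinner_ext_right assms)
qed

lemma cadjoint_cadjoint:
  fixes T :: "'a::chilbert \<Rightarrow> 'a"
  shows "bounded_op T \<Longrightarrow> cadjoint (cadjoint T) = T"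
  by (rule cadjoint_eqI) (rule cinner_cadjoint_left)

lemma bounded_op_cadjoint:
  fixes T :: "'a::chilbert \<Rightarrow> 'a"
  assumes T: "bounded_op T"
  shows "bounded_op (cadjoint T)"
proof -
  obtain K where K: "\<And>x. norm (T x) \<le> norm x * K" and "K > 0"
    using bounded_linear.pos_bounded[OF bounded_op_imp_bounded_linear[OF T]] by blast
  have "cadjoint T (x + y) = cadjoint T x + cadjoint T y" for x y
    by (rule cinner_ext_right) (simp add: cinner_cadjoint_right[OF T, symmetric] cinner_add_right)
  moreover have "cadjoint T (cscale c x) = cscale c (cadjoint T x)" for c x
    by (rule cinner_ext_right) (simp add: cinner_cadjoint_right[OF T, symmetric] cinner_cscale_right)
  ultimately have "clinear_op (cadjoint T)"
    unfolding clinear_op_def by blast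
  moreover have "norm (cadjoint T y) \<le> norm y * K" for y
  proof -
    let ?w = "cadjoint T y"
    have "norm ?w * norm ?w = Re (cinner (T ?w) y)"
      by (simp add: cinner_cadjoint_right[OF T] Re_cinner_self power2_eq_square)
    also have "\<dots> \<le> norm (T ?w) * norm y"
      using complex_Re_le_cmod cmod_cinner_le order_trans by blast
    also have "\<dots> \<le> norm ?w * (norm y * K)"
      using mult_right_mono[OF K[of ?w], of "norm y"] by (simp add: algebra_simps)
    finally show ?thesis
      by (cases "?w = 0") (use \<open>K > 0\<close> in auto)
  qed
  ultimately show ?thesis
    unfolding bounded_op_def by blast
qed

lemma cadjoint_comp:
  fixes S T :: "'a::chilbert \<Rightarrow> 'a"
  shows "bounded_op S \<Longrightarrow> bounded_op T \<Longrightarrow> cadjoint (S \<circ> T) = cadjoint T \<circ> cadjoint S"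
  by (rule cadjoint_eqI) (simp add: cinner_cadjoint_right)

lemma cadjoint_plus:
  fixes S T :: "'a::chilbert \<Rightarrow> 'a"
  shows "bounded_op S \<Longrightarrow> bounded_op T \<Longrightarrow>
    cadjoint (\<lambda>x. S x + T x) = (\<lambda>x. cadjoint S x + cadjoint T x)"
  by (rule cadjoint_eqI) (simp add: cinner_cadjoint_right cinner_add_left cinner_add_right)

lemma cadjoint_diff:
  fixes S T :: "'a::chilbert \<Rightarrow> 'a"
  shows "bounded_op S \<Longrightarrow> bounded_op T \<Longrightarrow>
    cadjoint (\<lambda>x. S x - T x) = (\<lambda>x. cadjoint S x - cadjoint T x)"
  by (rule cadjoint_eqI) (simp add: cinner_cadjoint_right cinner_diff_left cinner_diff_right)

lemma cadjoint_scale: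
  fixes T :: "'a::chilbert \<Rightarrow> 'a"
  shows "bounded_op T \<Longrightarrow> cadjoint (\<lambda>x. cscale c (T x)) = (\<lambda>x. cscale (cnj c) (cadjoint T x))"
  by (rule cadjoint_eqI) (simp add: cinner_cadjoint_right cinner_cscale_left cinner_cscale_right)

lemma cadjoint_id: "cadjoint id = id"
  by (rule cadjoint_eqI) simp

section \<open>Commutants\<close>

definition commutant :: "('a::complex_inner \<Rightarrow> 'a) set \<Rightarrow> ('a \<Rightarrow> 'a) set" where
  "commutant X = {S. bounded_op S \<and> (\<forall>R\<in>X. S \<circ> R = R \<circ> S)}"

definition star_closed :: "('a::complex_inner \<Rightarrow> 'a) set \<Rightarrow> bool" where
  "star_closed X \<longleftrightarrow> (\<forall>R\<in>X. cadjoint R \<in> X)"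

lemma commutant_bounded_op: "S \<in> commutant X \<Longrightarrow> bounded_op S"
  by (simp add: commutant_def)

lemma commutant_commute: "S \<in> commutant X \<Longrightarrow> R \<in> X \<Longrightarrow> S (R x) = R (S x)"
  by (simp add: commutant_def fun_eq_iff)

lemma commutantI: "bounded_op S \<Longrightarrow> (\<And>R x. R \<in> X \<Longrightarrow> S (R x) = R (S x)) \<Longrightarrow> S \<in> commutant X"
  by (simp add: commutant_def fun_eq_iff)

lemma commutant_antimono: "X \<subseteq> Y \<Longrightarrow> commutant Y \<subseteq> commutant X"
  by (auto simp: commutant_def)

lemma subset_bicommutant: "(\<And>R. R \<in> X \<Longrightarrow> bounded_op R) \<Longrightarrow> X \<subseteq> commutant (commutant X)"
  by (auto simp: commutant_def)

lemma star_closed_commutant: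
  fixes X :: "('a::chilbert \<Rightarrow> 'a) set"
  assumes X: "\<And>R. R \<in> X \<Longrightarrow> bounded_op R" "star_closed X"
  shows "star_closed (commutant X)"
  unfolding star_closed_def
proof
  fix S assume S: "S \<in> commutant X"
  have "cadjoint S \<circ> R = R \<circ> cadjoint S" if R: "R \<in> X" for R
  proof -
    have "S \<circ> cadjoint R = cadjoint R \<circ> S"
      using S R X(2) by (simp add: commutant_def star_closed_def)
    then have "cadjoint (S \<circ> cadjoint R) = cadjoint (cadjoint R \<circ> S)"
      by simp
    then show ?thesis
      using S R X(1)
      by (simp add: cadjoint_comp bounded_op_cadjoint cadjoint_cadjoint commutant_bounded_op)
  qed
  then show "cadjoint S \<in> commutant X"
    using S by (simp add: commutant_def bounded_op_cadjoint)
qed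

lemma wot_closed_commutant:
  fixes X :: "('a::chilbert \<Rightarrow> 'a) set"
  assumes X: "\<And>R. R \<in> X \<Longrightarrow> bounded_op R"
  shows "wot_closed (commutant X)"
  unfolding wot_closed_def
proof (intro allI impI)
  fix T assume T: "bounded_op T \<and> (\<forall>e>0. \<forall>F. finite F \<longrightarrow>
      (\<exists>S\<in>commutant X. \<forall>(x, y)\<in>F. cmod (cinner (T x) y - cinner (S x) y) < e))"
  have "cinner (T (R x)) y = cinner (R (T x)) y" if R: "R \<in> X" for R x y
  proof -
    \<comment> \<open>both sides are approximated by the same quantity for an \<open>S\<close> in the commutant\<close>
    let ?\<delta> = "cinner (T (R x)) y - cinner (T x) (cadjoint R y)"
    have "cmod ?\<delta> < e" if "e > 0" for e
    proof -
      obtain S where S: "S \<in> commutant X"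
        and F: "\<forall>(a, b)\<in>{(R x, y), (x, cadjoint R y)}. cmod (cinner (T a) b - cinner (S a) b) < e / 2"
        using T[THEN conjunct2, rule_format, of "e / 2" "{(R x, y), (x, cadjoint R y)}"] \<open>e > 0\<close>
        by auto
      have "cinner (S (R x)) y = cinner (S x) (cadjoint R y)"
        by (simp add: commutant_commute[OF S R] cinner_cadjoint_right[OF X[OF R]])
      then have "?\<delta> = (cinner (T (R x)) y - cinner (S (R x)) y)
          - (cinner (T x) (cadjoint R y) - cinner (S x) (cadjoint R y))"
        by simp
      also have "cmod \<dots> < e / 2 + e / 2"
        using F norm_triangle_ineq4 by (smt (verit) case_prodD insertCI)
      finally show ?thesis by simp
    qed
    then have "?\<delta> = 0"
      by (metis less_irrefl zero_less_norm_iff)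
    then show ?thesis
      by (simp add: cinner_cadjoint_right[OF X[OF R]])
  qed
  then show "T \<in> commutant X"
    using T by (intro commutantI cinner_ext_left) auto
qed

lemma von_neumann_algebra_commutant:
  fixes X :: "('a::chilbert \<Rightarrow> 'a) set"
  assumes X: "\<And>R. R \<in> X \<Longrightarrow> bounded_op R" "star_closed X"
  shows "von_neumann_algebra (commutant X)"
  unfolding von_neumann_algebra_def
proof (intro conjI ballI allI)
  show "id \<in> commutant X"
    by (simp add: commutant_def bounded_op_id)
  show "(\<lambda>x. S x + T x) \<in> commutant X" "S \<circ> T \<in> commutant X"
    if S: "S \<in> commutant X" and T: "T \<in> commutant X" for S T
  proof (rule_tac [!] commutantI)
    show "bounded_op (\<lambda>x. S x + T x)" "bounded_op (S \<circ> T)"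
      using S T by (simp_all add: commutant_bounded_op bounded_op_plus bounded_op_comp)
    show "S (R x) + T (R x) = R (S x + T x)" "(S \<circ> T) (R x) = R ((S \<circ> T) x)"
      if "R \<in> X" for R x
      using that by (simp_all add: commutant_commute[OF S] commutant_commute[OF T] bounded_op_add X)
  qed
  show "(\<lambda>x. cscale c (T x)) \<in> commutant X" if T: "T \<in> commutant X" for c T
  proof (rule commutantI)
    show "bounded_op (\<lambda>x. cscale c (T x))"
      using T by (simp add: commutant_bounded_op bounded_op_scale)
    show "cscale c (T (R x)) = R (cscale c (T x))" if "R \<in> X" for R x
      using that by (simp add: commutant_commute[OF T] bounded_op_cscale X)
  qed
  show "cadjoint T \<in> commutant X" if "T \<in> commutant X" for T
    using star_closed_commutant[OF X] that by (simp add: star_closed_def)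
  show "wot_closed (commutant X)"
    using wot_closed_commutant X(1) .
qed (simp add: commutant_bounded_op)

lemma vN_generated_subset_bicommutant:
  fixes N :: "'a::chilbert \<Rightarrow> 'a"
  assumes "bounded_op N"
  shows "vN_generated N \<subseteq> commutant (commutant {N, cadjoint N})"
proof -
  have X: "\<And>R. R \<in> {N, cadjoint N} \<Longrightarrow> bounded_op R" "star_closed {N, cadjoint N}"
    using assms by (auto simp: star_closed_def bounded_op_cadjoint cadjoint_cadjoint)
  have "von_neumann_algebra (commutant (commutant {N, cadjoint N}))"
    by (rule von_neumann_algebra_commutant[OF commutant_bounded_op star_closed_commutant[OF X]])
  moreover have "N \<in> commutant (commutant {N, cadjoint N})"
    using subset_bicommutant X(1) by blast
  ultimately show ?thesis
    unfolding vN_generated_def by blast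
qed

section \<open>A conjugation adapted to a commutative *-algebra\<close>

lemma eq_on_dense_imp_eq:
  fixes f g :: "'a::topological_space \<Rightarrow> 'b::t2_space"
  assumes "continuous_on UNIV f" "continuous_on UNIV g"
    and "closure S = UNIV" "\<And>x. x \<in> S \<Longrightarrow> f x = g x"
  shows "f x = g x"
proof -
  have "closure S \<subseteq> {x. f x = g x}"
    using assms by (intro closure_minimal closed_Collect_eq) auto
  then show ?thesis
    using assms(3) by blast
qed

locale commutative_star_algebra =
  fixes A :: "('a::chilbert \<Rightarrow> 'a) set"
  assumes mem_bounded_op: "T \<in> A \<Longrightarrow> bounded_op T"
    and cadjoint_mem: "T \<in> A \<Longrightarrow> cadjoint T \<in> A"
    and mem_commute: "S \<in> A \<Longrightarrow> T \<in> A \<Longrightarrow> S (T x) = T (S x)"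
    and id_mem: "id \<in> A"
    and plus_mem: "S \<in> A \<Longrightarrow> T \<in> A \<Longrightarrow> (\<lambda>x. S x + T x) \<in> A"
    and comp_mem: "S \<in> A \<Longrightarrow> T \<in> A \<Longrightarrow> S \<circ> T \<in> A"
    and scale_mem: "T \<in> A \<Longrightarrow> (\<lambda>x. cscale c (T x)) \<in> A"
begin

lemma zero_mem: "(\<lambda>x. 0) \<in> A"
  using scale_mem[OF id_mem, of 0] by simp

lemma diff_mem: "S \<in> A \<Longrightarrow> T \<in> A \<Longrightarrow> (\<lambda>x. S x - T x) \<in> A"
  using plus_mem[OF _ scale_mem, of S T "- 1"] by (simp add: cscale_minus_left)

text \<open>Every element of a commutative *-algebra is normal, which makes \<open>S x \<mapsto> S\<^sup>* x\<close>
  isometric on each orbit \<open>A x\<close>.\<close>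

lemma cinner_cadjoint_apply:
  assumes "S \<in> A" "T \<in> A"
  shows "cinner (cadjoint S x) (cadjoint T x) = cnj (cinner (S x) (T x))"
proof -
  have "cinner (cadjoint S x) (cadjoint T x) = cinner (cadjoint S (T x)) x"
    by (simp add: cinner_cadjoint_right mem_bounded_op assms mem_commute cadjoint_mem)
  also have "\<dots> = cinner (T x) (S x)"
    by (simp add: cinner_cadjoint_left mem_bounded_op assms)
  finally show ?thesis
    by (metis cinner_commute)
qed

definition orbit_span :: "(nat \<Rightarrow> 'a) \<Rightarrow> nat \<Rightarrow> 'a set" where
  "orbit_span f k = {\<Sum>i<k. T i (f i) | T. \<forall>i. T i \<in> A}"

lemma orbit_spanI: "(\<And>i. T i \<in> A) \<Longrightarrow> (\<Sum>i<k. T i (f i)) \<in> orbit_span f k"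
  unfolding orbit_span_def by blast

lemma orbit_spanE:
  assumes "x \<in> orbit_span f k"
  obtains T where "\<forall>i. T i \<in> A" "x = (\<Sum>i<k. T i (f i))"
  using assms unfolding orbit_span_def by blast

lemma orbit_span_cong: "(\<And>i. i < k \<Longrightarrow> f i = g i) \<Longrightarrow> orbit_span f k = orbit_span g k"
  unfolding orbit_span_def by (auto intro!: sum.cong)

lemma csubspace_orbit_span: "csubspace (orbit_span f k)"
  unfolding csubspace_def
proof (intro conjI ballI allI)
  show "0 \<in> orbit_span f k"
    using orbit_spanI[of "\<lambda>i x. 0", OF zero_mem] by simp
  show "x + y \<in> orbit_span f k" if x: "x \<in> orbit_span f k" and y: "y \<in> orbit_span f k" for x y
  proof -
    obtain T where "\<forall>i. T i \<in> A" "x = (\<Sum>i<k. T i (f i))"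
      using x by (rule orbit_spanE)
    moreover obtain S where "\<forall>i. S i \<in> A" "y = (\<Sum>i<k. S i (f i))"
      using y by (rule orbit_spanE)
    ultimately show ?thesis
      using orbit_spanI[of "\<lambda>i z. T i z + S i z", OF plus_mem] by (simp add: sum.distrib)
  qed
  show "cscale c x \<in> orbit_span f k" if x: "x \<in> orbit_span f k" for c x
  proof -
    obtain T where "\<forall>i. T i \<in> A" "x = (\<Sum>i<k. T i (f i))"
      using x by (rule orbit_spanE)
    then show ?thesis
      using orbit_spanI[of "\<lambda>i z. cscale c (T i z)", OF scale_mem] by (simp add: cscale_sum_right)
  qed
qed

definition pad_ops :: "nat \<Rightarrow> (nat \<Rightarrow> 'a \<Rightarrow> 'a) \<Rightarrow> nat \<Rightarrow> 'a \<Rightarrow> 'a" where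
  "pad_ops k T i = (if i < k then T i else (\<lambda>x. 0))"

lemma pad_ops_mem: "(\<And>i. T i \<in> A) \<Longrightarrow> pad_ops k T i \<in> A"
  by (simp add: pad_ops_def zero_mem)

lemma sum_pad_ops:
  assumes "k \<le> m"
  shows "(\<Sum>i<m. pad_ops k T i (f i)) = (\<Sum>i<k. T i (f i))"
proof -
  have "(\<Sum>i<m. pad_ops k T i (f i)) = (\<Sum>i<k. pad_ops k T i (f i))"
    using assms by (intro sum.mono_neutral_right) (auto simp: pad_ops_def)
  then show ?thesis
    by (simp add: pad_ops_def)
qed

lemma cadjoint_pad_ops: "cadjoint (pad_ops k T i) = pad_ops k (\<lambda>i. cadjoint (T i)) i"
  by (simp add: pad_ops_def cadjoint_eqI)

lemma orbit_span_gen: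
  assumes "T \<in> A" "i < k"
  shows "T (f i) \<in> orbit_span f k"
proof -
  have "(\<Sum>j<k. (if j = i then T else (\<lambda>x. 0)) (f j)) = T (f i)"
    using assms(2) by (simp add: if_distrib[of "\<lambda>S. S (f _)"] cong: if_cong)
  then show ?thesis
    using orbit_spanI[where T = "\<lambda>j. if j = i then T else (\<lambda>x. 0)" and k = k and f = f]
      assms(1) zero_mem by auto
qed

lemma closed_csubspace_orbit_closure:
  "csubspace (closure (orbit_span f k))" "closed (closure (orbit_span f k))"
  by (simp_all add: csubspace_closure csubspace_orbit_span)

end

locale cyclic_decomposition = commutative_star_algebra +
  fixes v :: 'a and d :: "nat \<Rightarrow> 'a"
  assumes dense_range: "closure (range d) = UNIV"
begin

text \<open>Gram--Schmidt for \<open>A\<close>-orbits: \<open>generator 0 = v\<close>, and \<open>generator (Suc n)\<close> is the part of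
  \<open>d n\<close> orthogonal to the orbits of the earlier generators.  Stage \<open>n\<close> holds the generators
  \<open>0, \<dots>, n\<close>.\<close>

primrec generator_stage :: "nat \<Rightarrow> nat \<Rightarrow> 'a" where
  "generator_stage 0 = (\<lambda>i. v)"
| "generator_stage (Suc n) = (generator_stage n)(Suc n :=
     d n - orth_proj (closure (orbit_span (generator_stage n) (Suc n))) (d n))"

definition generator :: "nat \<Rightarrow> 'a" where
  "generator i = generator_stage i i"

lemma generator_stage_eq: "i \<le> n \<Longrightarrow> generator_stage n i = generator i"
  by (induction n) (auto simp: generator_def le_Suc_eq)

lemma generator_0: "generator 0 = v"
  by (simp add: generator_def)

lemma generator_Suc:
  "generator (Suc n) = d n - orth_proj (closure (orbit_span generator (Suc n))) (d n)"
proof -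
  have "orbit_span (generator_stage n) (Suc n) = orbit_span generator (Suc n)"
    by (rule orbit_span_cong) (simp add: generator_stage_eq)
  then show ?thesis
    by (simp add: generator_def)
qed

lemma generator_orthogonal_earlier_orbit:
  assumes "T \<in> A" "i < j"
  shows "cinner (T (generator i)) (generator j) = 0"
proof -
  obtain n where n: "j = Suc n" "i < Suc n"
    using assms(2) by (cases j) auto
  have "T (generator i) \<in> closure (orbit_span generator (Suc n))"
    using orbit_span_gen[OF assms(1) n(2)] closure_subset by blast
  then have "cinner (generator j) (T (generator i)) = 0"
    unfolding n generator_Suc by (rule orth_proj_orthogonal[OF closed_csubspace_orbit_closure])
  then show ?thesis
    by (metis cinner_commute complex_cnj_zero)
qed

lemma generator_orbits_orthogonal:
  assumes "S \<in> A" "T \<in> A" "i \<noteq> j"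
  shows "cinner (S (generator i)) (T (generator j)) = 0"
proof -
  have R: "cadjoint T \<circ> S \<in> A" "cadjoint (cadjoint T \<circ> S) \<in> A"
    using assms by (simp_all add: comp_mem cadjoint_mem)
  have "cinner (S (generator i)) (T (generator j)) = cinner ((cadjoint T \<circ> S) (generator i)) (generator j)"
    using assms by (simp add: cinner_cadjoint_left mem_bounded_op)
  also have "\<dots> = 0"
  proof (cases "i < j")
    case True
    then show ?thesis
      using generator_orthogonal_earlier_orbit[OF R(1)] by blast
  next
    case False
    then have "cinner (cadjoint (cadjoint T \<circ> S) (generator j)) (generator i) = 0"
      using generator_orthogonal_earlier_orbit[OF R(2)] assms(3) by simp
    then show ?thesis
      by (metis R(1) cinner_cadjoint_left cinner_commute complex_cnj_zero mem_bounded_op)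
  qed
  finally show ?thesis .
qed

definition orbit_sums :: "'a set" where
  "orbit_sums = (\<Union>k. orbit_span generator k)"

lemma orbit_sumsI: "\<forall>i. T i \<in> A \<Longrightarrow> (\<Sum>i<k. T i (generator i)) \<in> orbit_sums"
  unfolding orbit_sums_def using orbit_spanI by blast

lemma orbit_sumsE:
  assumes "x \<in> orbit_sums"
  obtains k T where "\<forall>i. T i \<in> A" "x = (\<Sum>i<k. T i (generator i))"
  using assms unfolding orbit_sums_def by (blast elim: orbit_spanE)

lemma orbit_sumsE2:
  assumes "x \<in> orbit_sums" "y \<in> orbit_sums"
  obtains m T S where "\<forall>i. T i \<in> A" "\<forall>i. S i \<in> A"
    "x = (\<Sum>i<m. T i (generator i))" "y = (\<Sum>i<m. S i (generator i))"
proof -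
  obtain k T where T: "\<forall>i. T i \<in> A" "x = (\<Sum>i<k. T i (generator i))"
    using assms(1) by (rule orbit_sumsE)
  obtain l S where S: "\<forall>i. S i \<in> A" "y = (\<Sum>i<l. S i (generator i))"
    using assms(2) by (rule orbit_sumsE)
  show thesis
    using that[of "pad_ops k T" "pad_ops l S" "max k l"] T S
    by (simp add: pad_ops_mem sum_pad_ops)
qed

lemma csubspace_orbit_sums: "csubspace orbit_sums"
  unfolding csubspace_def
proof (intro conjI ballI allI)
  show "0 \<in> orbit_sums"
    using orbit_sumsI[of "\<lambda>i. id" 0] id_mem by simp
  show "x + y \<in> orbit_sums" if "x \<in> orbit_sums" "y \<in> orbit_sums" for x y
    using that
  proof (rule orbit_sumsE2)
    fix m T S assume "\<forall>i. T i \<in> A" "\<forall>i. S i \<in> A"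
      "x = (\<Sum>i<m. T i (generator i))" "y = (\<Sum>i<m. S i (generator i))"
    then show ?thesis
      using orbit_sumsI[of "\<lambda>i z. T i z + S i z" m] plus_mem by (simp add: sum.distrib)
  qed
  show "cscale c x \<in> orbit_sums" if "x \<in> orbit_sums" for c x
    using that
  proof (rule orbit_sumsE)
    fix k T assume "\<forall>i. T i \<in> A" "x = (\<Sum>i<k. T i (generator i))"
    then show ?thesis
      using orbit_sumsI[of "\<lambda>i z. cscale c (T i z)" k] scale_mem by (simp add: cscale_sum_right)
  qed
qed

lemma closure_orbit_sums: "closure orbit_sums = UNIV"
proof -
  have sub: "orbit_span generator k \<subseteq> orbit_sums" for k
    unfolding orbit_sums_def by blast
  have "d n \<in> closure orbit_sums" for n
  proof -
    let ?M = "closure (orbit_span generator (Suc n))"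
    have "orth_proj ?M (d n) \<in> closure orbit_sums"
      using orth_proj_in[OF closed_csubspace_orbit_closure] closure_mono[OF sub] by blast
    moreover have "generator (Suc n) \<in> closure orbit_sums"
      using orbit_span_gen[OF id_mem, of "Suc n" "Suc (Suc n)" generator] sub closure_subset by auto
    ultimately have "orth_proj ?M (d n) + generator (Suc n) \<in> closure orbit_sums"
      using csubspace_closure[OF csubspace_orbit_sums] unfolding csubspace_def by blast
    then show ?thesis
      by (simp add: generator_Suc)
  qed
  then show ?thesis
    using closure_minimal[of "range d" "closure orbit_sums"] dense_range by auto
qed

lemma cinner_orbit_sums:
  assumes "\<forall>i. S i \<in> A" "\<forall>i. T i \<in> A"
  shows "cinner (\<Sum>i<m. S i (generator i)) (\<Sum>i<m. T i (generator i))
    = (\<Sum>i<m. cinner (S i (generator i)) (T i (generator i)))"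
proof -
  have "cinner (\<Sum>i<m. S i (generator i)) (\<Sum>j<m. T j (generator j))
      = (\<Sum>i<m. \<Sum>j<m. cinner (S i (generator i)) (T j (generator j)))"
    by (simp add: cinner_sum_left cinner_sum_right) (rule sum.swap)
  also have "\<dots> = (\<Sum>i<m. \<Sum>j<m. if i = j then cinner (S i (generator i)) (T j (generator j)) else 0)"
    using assms generator_orbits_orthogonal by (intro sum.cong) auto
  finally show ?thesis
    by simp
qed

lemma cinner_cadjoint_orbit_sums:
  assumes "\<forall>i. S i \<in> A" "\<forall>i. T i \<in> A"
  shows "cinner (\<Sum>i<m. cadjoint (S i) (generator i)) (\<Sum>i<m. cadjoint (T i) (generator i))
    = cnj (cinner (\<Sum>i<m. S i (generator i)) (\<Sum>i<m. T i (generator i)))"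
proof -
  have "\<forall>i. cadjoint (S i) \<in> A" "\<forall>i. cadjoint (T i) \<in> A"
    using assms by (simp_all add: cadjoint_mem)
  then show ?thesis
    using assms cinner_orbit_sums[of "\<lambda>i. cadjoint (S i)" "\<lambda>i. cadjoint (T i)"]
    by (simp add: cinner_orbit_sums cinner_cadjoint_apply)
qed

lemma cadjoint_orbit_sum_welldefined:
  assumes T: "\<forall>i. T i \<in> A" and S: "\<forall>i. S i \<in> A"
    and eq: "(\<Sum>i<k. T i (generator i)) = (\<Sum>i<l. S i (generator i))"
  shows "(\<Sum>i<k. cadjoint (T i) (generator i)) = (\<Sum>i<l. cadjoint (S i) (generator i))"
proof -
  define m where "m = max k l"
  \<comment> \<open>\<open>\<Sum> R\<^sub>i\<^sup>* w\<^sub>i\<close> has the same norm as \<open>\<Sum> R\<^sub>i w\<^sub>i = 0\<close>\<close>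
  define R where "R i x = pad_ops k T i x - pad_ops l S i x" for i x
  have R: "\<forall>i. R i \<in> A"
    unfolding R_def using T S by (simp add: pad_ops_mem diff_mem)
  have "(\<Sum>i<m. R i (generator i)) = 0"
    using eq by (simp add: R_def sum_subtractf sum_pad_ops m_def)
  then have "cinner (\<Sum>i<m. cadjoint (R i) (generator i)) (\<Sum>i<m. cadjoint (R i) (generator i)) = 0"
    by (simp add: cinner_cadjoint_orbit_sums[OF R R])
  moreover have "cadjoint (R i) = (\<lambda>x. pad_ops k (\<lambda>i. cadjoint (T i)) i x - pad_ops l (\<lambda>i. cadjoint (S i)) i x)" for i
    using T S unfolding R_def
    by (simp add: cadjoint_diff mem_bounded_op pad_ops_mem cadjoint_pad_ops)
  ultimately show ?thesis
    by (simp add: sum_subtractf sum_pad_ops m_def)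
qed

definition orbit_conj0 :: "'a \<Rightarrow> 'a" where
  "orbit_conj0 x = (SOME y. \<exists>k T. (\<forall>i. T i \<in> A) \<and> x = (\<Sum>i<k. T i (generator i))
      \<and> y = (\<Sum>i<k. cadjoint (T i) (generator i)))"

lemma orbit_conj0_eq:
  assumes "\<forall>i. T i \<in> A"
  shows "orbit_conj0 (\<Sum>i<k. T i (generator i)) = (\<Sum>i<k. cadjoint (T i) (generator i))"
proof -
  let ?P = "\<lambda>y. \<exists>l S. (\<forall>i. S i \<in> A) \<and> (\<Sum>i<k. T i (generator i)) = (\<Sum>i<l. S i (generator i))
      \<and> y = (\<Sum>i<l. cadjoint (S i) (generator i))"
  have "?P (\<Sum>i<k. cadjoint (T i) (generator i))"
    using assms by blast
  then have "?P (orbit_conj0 (\<Sum>i<k. T i (generator i)))"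
    unfolding orbit_conj0_def by (rule someI)
  then show ?thesis
    using cadjoint_orbit_sum_welldefined[OF assms] by auto
qed

lemma orbit_conj0_add:
  assumes "x \<in> orbit_sums" "y \<in> orbit_sums"
  shows "orbit_conj0 (x + y) = orbit_conj0 x + orbit_conj0 y"
  using assms
proof (rule orbit_sumsE2)
  fix m T S assume T: "\<forall>i. T i \<in> A" and S: "\<forall>i. S i \<in> A"
    and xy: "x = (\<Sum>i<m. T i (generator i))" "y = (\<Sum>i<m. S i (generator i))"
  have TS: "\<forall>i. (\<lambda>z. T i z + S i z) \<in> A"
    using T S by (simp add: plus_mem)
  have "x + y = (\<Sum>i<m. T i (generator i) + S i (generator i))"
    by (simp add: xy sum.distrib)
  then show ?thesis
    using orbit_conj0_eq[OF TS, of m] T S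
    by (simp add: xy orbit_conj0_eq cadjoint_plus mem_bounded_op sum.distrib)
qed

lemma orbit_conj0_scale:
  assumes "x \<in> orbit_sums"
  shows "orbit_conj0 (cscale c x) = cscale (cnj c) (orbit_conj0 x)"
  using assms
proof (rule orbit_sumsE)
  fix k T assume T: "\<forall>i. T i \<in> A" and x: "x = (\<Sum>i<k. T i (generator i))"
  have cT: "\<forall>i. (\<lambda>z. cscale c (T i z)) \<in> A"
    using T by (simp add: scale_mem)
  show ?thesis
    using orbit_conj0_eq[OF cT, of k] T
    by (simp add: x orbit_conj0_eq cadjoint_scale mem_bounded_op cscale_sum_right)
qed

lemma cinner_orbit_conj0:
  assumes "x \<in> orbit_sums" "y \<in> orbit_sums"
  shows "cinner (orbit_conj0 x) (orbit_conj0 y) = cnj (cinner x y)"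
  using assms
  by (rule orbit_sumsE2) (simp add: orbit_conj0_eq cinner_cadjoint_orbit_sums)

lemma orbit_conj0_mem: "x \<in> orbit_sums \<Longrightarrow> orbit_conj0 x \<in> orbit_sums"
  by (auto elim!: orbit_sumsE simp: orbit_conj0_eq cadjoint_mem intro!: orbit_sumsI)

lemma orbit_conj0_involutive:
  assumes "x \<in> orbit_sums"
  shows "orbit_conj0 (orbit_conj0 x) = x"
  using assms
proof (rule orbit_sumsE)
  fix k T assume T: "\<forall>i. T i \<in> A" and x: "x = (\<Sum>i<k. T i (generator i))"
  then have "\<forall>i. cadjoint (T i) \<in> A"
    by (simp add: cadjoint_mem)
  then show ?thesis
    using T orbit_conj0_eq[of "\<lambda>i. cadjoint (T i)" k]
    by (simp add: x orbit_conj0_eq cadjoint_cadjoint mem_bounded_op)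
qed

lemma orbit_conj0_apply:
  assumes S: "S \<in> A" and "x \<in> orbit_sums"
  shows "S x \<in> orbit_sums" "orbit_conj0 (S x) = cadjoint S (orbit_conj0 x)"
  using assms(2)
proof (rule_tac [!] orbit_sumsE)
  fix k T assume T: "\<forall>i. T i \<in> A" and x: "x = (\<Sum>i<k. T i (generator i))"
  have ST: "\<forall>i. S \<circ> T i \<in> A"
    using T S by (simp add: comp_mem)
  have Sx: "S x = (\<Sum>i<k. (S \<circ> T i) (generator i))"
    by (simp add: x bounded_op_sum mem_bounded_op S)
  show "S x \<in> orbit_sums"
    unfolding Sx using ST by (rule orbit_sumsI)
  have "orbit_conj0 (S x) = (\<Sum>i<k. cadjoint (S \<circ> T i) (generator i))"
    unfolding Sx by (rule orbit_conj0_eq[OF ST])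
  also have "\<dots> = (\<Sum>i<k. cadjoint S (cadjoint (T i) (generator i)))"
    using S T by (simp add: cadjoint_comp mem_bounded_op mem_commute cadjoint_mem)
  finally show "orbit_conj0 (S x) = cadjoint S (orbit_conj0 x)"
    using S by (simp add: x orbit_conj0_eq[OF T] bounded_op_sum bounded_op_cadjoint mem_bounded_op)
qed

lemma orbit_conj0_v: "v \<in> orbit_sums" "orbit_conj0 v = v"
proof -
  have v: "v = (\<Sum>i<1. id (generator i))"
    by (simp add: generator_0)
  show "v \<in> orbit_sums"
    by (subst v) (rule orbit_sumsI[of "\<lambda>i. id"], simp add: id_mem)
  have "orbit_conj0 (\<Sum>i<1. id (generator i)) = (\<Sum>i<1. cadjoint id (generator i))"
    by (rule orbit_conj0_eq) (simp add: id_mem del: id_apply)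
  then show "orbit_conj0 v = v"
    by (simp add: cadjoint_id generator_0)
qed

lemma uniformly_continuous_orbit_conj0: "uniformly_continuous_on orbit_sums orbit_conj0"
  unfolding uniformly_continuous_on_def
proof (intro allI impI exI conjI ballI)
  fix e :: real and x y assume "e > 0" "x \<in> orbit_sums" "y \<in> orbit_sums" "dist y x < e"
  moreover have "cscale (- 1) x \<in> orbit_sums"
    using csubspace_orbit_sums \<open>x \<in> orbit_sums\<close> unfolding csubspace_def by blast
  then have "- x \<in> orbit_sums" "orbit_conj0 (- x) = - orbit_conj0 x"
    using orbit_conj0_scale[OF \<open>x \<in> orbit_sums\<close>, of "- 1"] by (simp_all add: cscale_minus_left)
  moreover have "y - x \<in> orbit_sums"
    using calculation csubspace_orbit_sums unfolding csubspace_def diff_conv_add_uminus by blast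
  ultimately have "norm (orbit_conj0 y - orbit_conj0 x) = norm (y - x)"
    using orbit_conj0_add[of y "- x"] cinner_orbit_conj0[of "y - x" "y - x"]
    by (metis cinner_commute diff_conv_add_uminus norm_eq_of_cinner_self_eq)
  then show "dist (orbit_conj0 y) (orbit_conj0 x) < e"
    using \<open>dist y x < e\<close> by (simp add: dist_norm)
qed simp

definition orbit_conj :: "'a \<Rightarrow> 'a" where
  "orbit_conj = (SOME g. uniformly_continuous_on UNIV g \<and> (\<forall>x\<in>orbit_sums. orbit_conj0 x = g x))"

lemma
  shows continuous_on_orbit_conj: "continuous_on X orbit_conj"
    and orbit_conj_eq_orbit_conj0: "x \<in> orbit_sums \<Longrightarrow> orbit_conj x = orbit_conj0 x"
proof -
  obtain g where "uniformly_continuous_on (closure orbit_sums) g" "\<And>x. x \<in> orbit_sums \<Longrightarrow> orbit_conj0 x = g x"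
    using uniformly_continuous_on_extension_on_closure[OF uniformly_continuous_orbit_conj0] by metis
  then have "\<exists>g. uniformly_continuous_on UNIV g \<and> (\<forall>x\<in>orbit_sums. orbit_conj0 x = g x)"
    using closure_orbit_sums by auto
  then have "uniformly_continuous_on UNIV orbit_conj \<and> (\<forall>x\<in>orbit_sums. orbit_conj0 x = orbit_conj x)"
    unfolding orbit_conj_def by (rule someI_ex)
  then show "continuous_on X orbit_conj" "x \<in> orbit_sums \<Longrightarrow> orbit_conj x = orbit_conj0 x"
    by (auto intro: continuous_on_subset uniformly_continuous_imp_continuous)
qed

lemma continuous_on_orbit_conj_compose [continuous_intros]:
  "continuous_on X f \<Longrightarrow> continuous_on X (\<lambda>x. orbit_conj (f x))"
  using continuous_on_compose2[OF continuous_on_orbit_conj] by blast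

lemma orbit_conj_involutive: "orbit_conj (orbit_conj x) = x"
  by (rule eq_on_dense_imp_eq[OF _ _ closure_orbit_sums])
     (auto intro!: continuous_intros simp: orbit_conj_eq_orbit_conj0 orbit_conj0_mem orbit_conj0_involutive)

lemma orbit_conj_add: "orbit_conj (x + y) = orbit_conj x + orbit_conj y"
proof -
  have step: "orbit_conj (x + y) = orbit_conj x + orbit_conj y" if "y \<in> orbit_sums" for x y
    by (rule eq_on_dense_imp_eq[OF _ _ closure_orbit_sums, of "\<lambda>x. orbit_conj (x + y)"])
       (use that in \<open>auto intro!: continuous_intros simp: orbit_conj_eq_orbit_conj0 orbit_conj0_add
         csubspace_orbit_sums[unfolded csubspace_def]\<close>)
  show ?thesis
    by (rule eq_on_dense_imp_eq[OF _ _ closure_orbit_sums, of "\<lambda>y. orbit_conj (x + y)"])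
       (auto intro!: continuous_intros simp: step)
qed

lemma orbit_conj_cscale: "orbit_conj (cscale c x) = cscale (cnj c) (orbit_conj x)"
  by (rule eq_on_dense_imp_eq[OF _ _ closure_orbit_sums])
     (auto intro!: continuous_intros simp: orbit_conj_eq_orbit_conj0 orbit_conj0_scale
       csubspace_orbit_sums[unfolded csubspace_def])

lemma cinner_orbit_conj: "cinner (orbit_conj x) (orbit_conj y) = cnj (cinner x y)"
proof -
  have step: "cinner (orbit_conj x) (orbit_conj y) = cnj (cinner x y)" if "y \<in> orbit_sums" for x y
    by (rule eq_on_dense_imp_eq[OF _ _ closure_orbit_sums, of "\<lambda>x. cinner (orbit_conj x) (orbit_conj y)"])
       (use that in \<open>auto intro!: continuous_intros simp: orbit_conj_eq_orbit_conj0 cinner_orbit_conj0\<close>)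
  show ?thesis
    by (rule eq_on_dense_imp_eq[OF _ _ closure_orbit_sums, of "\<lambda>y. cinner (orbit_conj x) (orbit_conj y)"])
       (auto intro!: continuous_intros simp: step)
qed

lemma orbit_conj_apply:
  assumes "S \<in> A"
  shows "orbit_conj (S (orbit_conj x)) = cadjoint S x"
proof (rule eq_on_dense_imp_eq[OF _ _ closure_orbit_sums, of "\<lambda>x. orbit_conj (S (orbit_conj x))"])
  have S: "bounded_op S" "bounded_op (cadjoint S)"
    using assms by (simp_all add: mem_bounded_op bounded_op_cadjoint)
  show "continuous_on UNIV (\<lambda>x. orbit_conj (S (orbit_conj x)))"
    by (intro continuous_intros continuous_on_bounded_op[OF S(1)])
  show "continuous_on UNIV (cadjoint S)"
    using continuous_on_bounded_op[OF S(2) continuous_on_id] by simp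
  show "orbit_conj (S (orbit_conj x)) = cadjoint S x" if "x \<in> orbit_sums" for x
    using that assms by (simp add: orbit_conj_eq_orbit_conj0 orbit_conj0_mem orbit_conj0_apply orbit_conj0_involutive)
qed

lemma conjugation_orbit_conj: "conjugation orbit_conj"
  unfolding conjugation_def
  using orbit_conj_add orbit_conj_cscale orbit_conj_involutive cinner_orbit_conj
  by (metis cinner_commute norm_eq_of_cinner_self_eq)

end

lemma (in commutative_star_algebra) adapted_conjugation_exists:
  assumes "is_separable TYPE('a)"
  shows "\<exists>J. conjugation J \<and> J v = v \<and> (\<forall>S\<in>A. \<forall>x. J (S (J x)) = cadjoint S x)"
proof -
  obtain D :: "'a set" where D: "countable D" "closure D = UNIV"
    using assms unfolding is_separable_def by blast
  then have "D \<noteq> {}"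
    by auto
  with D interpret cyclic_decomposition A v "from_nat_into D"
    by unfold_locales (simp add: range_from_nat_into)
  show ?thesis
    using conjugation_orbit_conj orbit_conj_eq_orbit_conj0 orbit_conj0_v orbit_conj_apply by metis
qed

section \<open>Rank-one perturbations of normal operators\<close>

lemma commutative_star_algebra_bicommutant:
  fixes X :: "('a::chilbert \<Rightarrow> 'a) set"
  assumes X: "\<And>R. R \<in> X \<Longrightarrow> bounded_op R" "star_closed X"
    and X_commute: "\<And>R R' x. R \<in> X \<Longrightarrow> R' \<in> X \<Longrightarrow> R (R' x) = R' (R x)"
  shows "commutative_star_algebra (commutant (commutant X))"
proof -
  have "X \<subseteq> commutant X"
    using X(1) X_commute by (auto intro: commutantI)
  then have sub: "commutant (commutant X) \<subseteq> commutant X"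
    by (rule commutant_antimono)
  have "von_neumann_algebra (commutant (commutant X))"
    by (rule von_neumann_algebra_commutant[OF commutant_bounded_op star_closed_commutant[OF X]])
  then show ?thesis
    unfolding von_neumann_algebra_def
    by unfold_locales (auto intro: commutant_commute dest: subsetD[OF sub])
qed

lemma vN_generated_commute:
  fixes N :: "'a::chilbert \<Rightarrow> 'a"
  assumes "normal_op N" "U \<in> vN_generated N"
  shows "U (N x) = N (U x)" "U (cadjoint N x) = cadjoint N (U x)"
proof -
  have N: "bounded_op N" "N \<circ> cadjoint N = cadjoint N \<circ> N"
    using assms(1) by (simp_all add: normal_op_def)
  then have "N \<in> commutant {N, cadjoint N}" "cadjoint N \<in> commutant {N, cadjoint N}"
    by (auto simp: commutant_def bounded_op_cadjoint)
  moreover have "U \<in> commutant (commutant {N, cadjoint N})"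
    using vN_generated_subset_bicommutant[OF N(1)] assms(2) by blast
  ultimately show "U (N x) = N (U x)" "U (cadjoint N x) = cadjoint N (U x)"
    by (simp_all add: commutant_commute)
qed

lemma commutative_star_algebra_normal_unitary:
  fixes N U :: "'a::chilbert \<Rightarrow> 'a"
  assumes "normal_op N" "unitary_op U" "U \<in> vN_generated N"
  shows "commutative_star_algebra (commutant (commutant {N, cadjoint N, U, cadjoint U}))"
proof (rule commutative_star_algebra_bicommutant)
  have N: "bounded_op N" "\<And>x. N (cadjoint N x) = cadjoint N (N x)"
    using assms(1) by (simp_all add: normal_op_def fun_eq_iff)
  have U: "bounded_op U" "\<And>x. U (cadjoint U x) = x" "\<And>x. cadjoint U (U x) = x"
    using assms(2) by (simp_all add: unitary_op_def fun_eq_iff)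
  show "\<And>R. R \<in> {N, cadjoint N, U, cadjoint U} \<Longrightarrow> bounded_op R"
    "star_closed {N, cadjoint N, U, cadjoint U}"
    using N U by (auto simp: star_closed_def bounded_op_cadjoint cadjoint_cadjoint)
  \<comment> \<open>\<open>U\<^sup>*\<close> commutes with \<open>N\<close> and \<open>N\<^sup>*\<close> because \<open>U\<close> does and \<open>U\<^sup>* = U\<^sup>-\<^sup>1\<close>\<close>
  show "R (R' x) = R' (R x)"
    if "R \<in> {N, cadjoint N, U, cadjoint U}" "R' \<in> {N, cadjoint N, U, cadjoint U}" for R R' x
    using that N U vN_generated_commute[OF assms(1,3)] by (auto, metis+)
qed

lemma cinner_conjugation:
  assumes "conjugation C"
  shows "cinner (C x) (C y) = cnj (cinner x y)"
proof -
  have C: "C (x + y) = C x + C y" "C (cscale c x) = cscale (cnj c) (C x)" "norm (C x) = norm x"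
    for x y c
    using assms by (simp_all add: conjugation_def)
  have C_diff: "C (x - y) = C x - C y" for x y
    using C(1)[of "x - y" y] by (simp add: eq_diff_eq)
  have Re: "Re (cinner (C x) (C y)) = Re (cinner x y)" for x y
    by (simp add: Re_cinner_polarization C(3) flip: C(1) C_diff)
  have "Im (cinner (C x) (C y)) = Re (cinner (C x) (C (cscale (- \<i>) y)))"
    by (simp add: Im_cinner_eq_Re C(2))
  also have "\<dots> = - Im (cinner x y)"
    by (simp add: Re cinner_cscale_right)
  finally show ?thesis
    by (simp add: complex_eq_iff Re)
qed

lemma conjugation_unitary_comp:
  fixes J U :: "'a::chilbert \<Rightarrow> 'a"
  assumes J: "conjugation J" and U: "unitary_op U" "\<And>x. J (U (J x)) = cadjoint U x"
  shows "conjugation (U \<circ> J)"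
proof -
  have U': "bounded_op U" "\<And>x. U (cadjoint U x) = x" "\<And>x. cadjoint U (U x) = x"
    using U(1) by (simp_all add: unitary_op_def fun_eq_iff)
  have J': "J (x + y) = J x + J y" "J (cscale c x) = cscale (cnj c) (J x)" "norm (J x) = norm x"
    for x y c
    using J by (simp_all add: conjugation_def)
  have "norm (U x) = norm x" for x
    by (rule norm_eq_of_cinner_self_eq) (simp add: cinner_cadjoint_right[OF U'(1)] U'(3))
  then show ?thesis
    unfolding conjugation_def comp_def
    by (simp add: J' bounded_op_add[OF U'(1)] bounded_op_cscale[OF U'(1)] U(2) U'(2))
qed

lemma complex_symmetric_rank_one_perturbation:
  fixes C N :: "'a::chilbert \<Rightarrow> 'a"
  assumes N: "bounded_op N" and C: "conjugation C" "\<And>x. C (cadjoint N (C x)) = N x"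
  shows "complex_symmetric (\<lambda>x. N x + cscale a (rank_one (C u) u x))"
proof -
  have C': "C (x + y) = C x + C y" "C (cscale c x) = cscale (cnj c) (C x)" "C (C x) = x" for x y c
    using C(1) by (simp_all add: conjugation_def)
  have "cadjoint (\<lambda>x. N x + cscale a (rank_one (C u) u x))
      = (\<lambda>x. cadjoint N x + cscale (cnj a) (rank_one u (C u) x))"
    by (rule cadjoint_eqI)
       (simp add: rank_one_def cinner_add_left cinner_add_right cinner_cscale_left cinner_cscale_right
         cinner_cadjoint_right[OF N] mult_ac flip: cinner_commute)
  moreover have "C (rank_one u (C u) (C x)) = rank_one (C u) u x" for x
    by (simp add: rank_one_def C'(2) cinner_conjugation[OF C(1)])
  ultimately show ?thesis
    unfolding complex_symmetric_def using C by (intro exI[of _ C]) (simp add: fun_eq_iff C')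
qed

theorem theorem4p1:
  fixes N U :: "'a::chilbert \<Rightarrow> 'a" and a :: complex and v :: 'a
  assumes "is_separable TYPE('a)"
    and "normal_op N"
    and "unitary_op U"
    and "U \<in> vN_generated N"
  shows "complex_symmetric (\<lambda>x. N x + cscale a (rank_one (U v) v x))"
proof -
  define A where "A = commutant (commutant {N, cadjoint N, U, cadjoint U})"
  interpret commutative_star_algebra A
    unfolding A_def using assms(2-4) by (rule commutative_star_algebra_normal_unitary)
  have N: "bounded_op N"
    using assms(2) by (simp add: normal_op_def)
  have U: "bounded_op U" "\<And>x. U (cadjoint U x) = x"
    using assms(3) by (simp_all add: unitary_op_def fun_eq_iff)
  have "{N, cadjoint N, U, cadjoint U} \<subseteq> A"
    unfolding A_def using N U(1) by (intro subset_bicommutant) (auto simp: bounded_op_cadjoint)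
  then have UA: "U \<in> A" "U \<circ> cadjoint N \<in> A"
    by (auto intro: comp_mem)
  obtain J where J: "conjugation J" "J v = v" "\<And>S x. S \<in> A \<Longrightarrow> J (S (J x)) = cadjoint S x"
    using adapted_conjugation_exists[OF assms(1), of v] by blast
  have C: "conjugation (U \<circ> J)"
    using J(1) assms(3) J(3)[OF UA(1)] by (rule conjugation_unitary_comp)
  have "(U \<circ> J) (cadjoint N ((U \<circ> J) x)) = N x" for x
  proof -
    have "J (cadjoint N (U (J x))) = cadjoint (U \<circ> cadjoint N) x"
      using J(3)[OF UA(2)] vN_generated_commute(2)[OF assms(2,4)] by simp
    then show ?thesis
      using vN_generated_commute(1)[OF assms(2,4)]
      by (simp add: cadjoint_comp N U bounded_op_cadjoint cadjoint_cadjoint)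
  qed
  then show ?thesis
    using complex_symmetric_rank_one_perturbation[OF N C, of a v] J(2) by simp
qed

end
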